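(* If $\mathbf X=(X,\mu,T)$ is a nontrivial weak mixing measure preserving system, $S$ is a set of rigidity for $\mathbf X$, and $m\in\mathbb Z\setminus\{0\}$, then $S+m$ is not a set of strong recurrence for $\mathbf X$.
   Context: A measure preserving system is a probability space $(X,\mu)$ with an invertible measure preserving map $T$. $S\subseteq\mathbb Z$ is a set of rigidity for $\mathbf X$ if $S$ is infinite and for all measurable $D\subseteq X$ and $\varepsilon>0$, $\{n\in S:\mu(D\triangle T^nD)>\varepsilon\}$ is finite. $S'\subseteq\mathbb Z$ is a set of strong recurrence for $\mathbf X$ if for every measurable $D$ with $\mu(D)>0$ there is $c>0$ such that $\{n\in S':\mu(D\cap T^nD)>c\}$ is infinite. *)

theory Defs
  imports "HOL-Probability.Probability"
begin

definition inv_mps :: "'a measure \<Rightarrow> ('a \<Rightarrow> 'a) \<Rightarrow> bool" where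
  "inv_mps M T \<longleftrightarrow> prob_space M \<and> T \<in> M \<rightarrow>\<^sub>M M
     \<and> bij_betw T (space M) (space M)
     \<and> the_inv_into (space M) T \<in> M \<rightarrow>\<^sub>M M
     \<and> (\<forall>A\<in>sets M. measure M (T -` A \<inter> space M) = measure M A)"

definition Tpow :: "'a measure \<Rightarrow> ('a \<Rightarrow> 'a) \<Rightarrow> int \<Rightarrow> 'a \<Rightarrow> 'a" where
  "Tpow M T n = (if 0 \<le> n then T ^^ nat n else (the_inv_into (space M) T) ^^ nat (- n))"

definition Tset :: "'a measure \<Rightarrow> ('a \<Rightarrow> 'a) \<Rightarrow> int \<Rightarrow> 'a set \<Rightarrow> 'a set" where
  "Tset M T n D = Tpow M T n ` D"

definition weak_mixing :: "'a measure \<Rightarrow> ('a \<Rightarrow> 'a) \<Rightarrow> bool" where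
  "weak_mixing M T \<longleftrightarrow> (\<forall>A\<in>sets M. \<forall>B\<in>sets M.
     (\<lambda>N. (\<Sum>n<N. \<bar>measure M (A \<inter> ((T ^^ n) -` B \<inter> space M)) - measure M A * measure M B\<bar>) / real N)
       \<longlonglongrightarrow> 0)"

definition nontrivial_sys :: "'a measure \<Rightarrow> bool" where
  "nontrivial_sys M \<longleftrightarrow> (\<exists>A\<in>sets M. 0 < measure M A \<and> measure M A < 1)"

definition set_of_rigidity :: "'a measure \<Rightarrow> ('a \<Rightarrow> 'a) \<Rightarrow> int set \<Rightarrow> bool" where
  "set_of_rigidity M T S \<longleftrightarrow> infinite S \<and>
     (\<forall>D\<in>sets M. \<forall>\<epsilon>>0. finite {n\<in>S. measure M (D - Tset M T n D \<union> (Tset M T n D - D)) > \<epsilon>})"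

definition set_of_strong_recurrence :: "'a measure \<Rightarrow> ('a \<Rightarrow> 'a) \<Rightarrow> int set \<Rightarrow> bool" where
  "set_of_strong_recurrence M T S' \<longleftrightarrow>
     (\<forall>D\<in>sets M. measure M D > 0 \<longrightarrow>
        (\<exists>c>0. infinite {n\<in>S'. measure M (D \<inter> Tset M T n D) > c}))"

end

theory Submission
  imports Defs
begin

text \<open>Pick \<open>A\<close> with \<open>0 < \<mu> A < 1\<close> and put \<open>D = A \<inter> T\<^sup>m (X - A)\<close>. Then \<open>D\<close> and \<open>T\<^sup>m D\<close> are
  disjoint, so for \<open>n \<in> S\<close> the set \<open>D \<inter> T\<^sup>n\<^sup>+\<^sup>m D\<close> lies in \<open>T\<^sup>m (T\<^sup>n D - D)\<close>, whose measure
  tends to \<open>0\<close> along \<open>S\<close> by rigidity. It remains to see \<open>\<mu> D > 0\<close>: otherwise \<open>A\<close> would be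
  invariant under \<open>T\<^sup>m\<close> up to a null set, hence \<open>\<mu> (A \<inter> T\<^sup>-\<^sup>k\<^sup>|\<^sup>m\<^sup>| A) = \<mu> A\<close> for all \<open>k\<close>, and the
  Cesaro averages in the definition of weak mixing would not tend to \<open>0\<close>.\<close>

lemma funpow_measurable: "f \<in> M \<rightarrow>\<^sub>M M \<Longrightarrow> f ^^ n \<in> M \<rightarrow>\<^sub>M M"
  by (induction n) (auto intro: measurable_comp)

lemma measure_funpow_vimage:
  assumes f: "f \<in> M \<rightarrow>\<^sub>M M"
    and preserving: "\<And>A. A \<in> sets M \<Longrightarrow> measure M (f -` A \<inter> space M) = measure M A"
    and A: "A \<in> sets M"
  shows "measure M ((f ^^ n) -` A \<inter> space M) = measure M A"
proof (induction n)
  case 0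
  show ?case using sets.sets_into_space[OF A] by (simp add: Int_absorb2)
next
  case (Suc n)
  have "(f ^^ Suc n) -` A \<inter> space M = f -` ((f ^^ n) -` A \<inter> space M) \<inter> space M"
    using measurable_space[OF f] by (auto simp: funpow_swap1)
  moreover have "(f ^^ n) -` A \<inter> space M \<in> sets M"
    using funpow_measurable[OF f] A by (rule measurable_sets)
  ultimately show ?case using preserving Suc.IH by metis
qed

lemma sym_diff_subset_Un: "sym_diff A C \<subseteq> sym_diff A B \<union> sym_diff B C"
  by auto

lemma (in finite_measure) measure_zero_if_subset_Un_null:
  assumes "X \<subseteq> Y \<union> Z" "Y \<in> sets M" "Z \<in> sets M" "measure M Y = 0" "measure M Z = 0"
  shows "measure M X = 0"
  using assms finite_measure_mono[of X "Y \<union> Z"] measure_Un_le[of Y M Z] measure_nonneg[of M X]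
  by (auto intro: antisym)

lemma (in finite_measure) measure_Int_eq_if_null_sym_diff:
  assumes A: "A \<in> sets M" and B: "B \<in> sets M" and null: "measure M (sym_diff A B) = 0"
  shows "measure M (A \<inter> B) = measure M A"
proof -
  have "measure M (A - A \<inter> B) = measure M A - measure M (A \<inter> B)"
    using finite_measure_Diff A B by auto
  moreover have "measure M (A - A \<inter> B) \<le> measure M (sym_diff A B)"
    using A B by (intro finite_measure_mono) auto
  ultimately show ?thesis using null measure_nonneg[of M "A - A \<inter> B"] by linarith
qed

lemma (in finite_measure) measure_sym_diff_eq_0_if_measure_Diff_eq_0:
  assumes A: "A \<in> sets M" and B: "B \<in> sets M"
    and same: "measure M A = measure M B" and null: "measure M (A - B) = 0"
  shows "measure M (sym_diff A B) = 0"
proof -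
  have "measure M (A - B) = measure M (B - A)"
    using finite_measure_Diff'[OF A B] finite_measure_Diff'[OF B A] same
    by (simp add: Int_commute)
  then show ?thesis
    using measure_zero_if_subset_Un_null[of "sym_diff A B" "A - B" "B - A"] A B null by auto
qed

lemma Cesaro_mean_not_tendsto_0:
  fixes g :: "nat \<Rightarrow> real"
  assumes q: "0 < q" and a: "0 < a" and nonneg: "\<And>n. 0 \<le> g n" and on_multiples: "\<And>k. g (k * q) = a"
  shows "\<not> (\<lambda>N. (\<Sum>n<N. g n) / real N) \<longlonglongrightarrow> 0"
proof
  assume lim: "(\<lambda>N. (\<Sum>n<N. g n) / real N) \<longlonglongrightarrow> 0"
  have "strict_mono (\<lambda>K. q * K)" using q by (simp add: strict_mono_def)
  then have "(\<lambda>K. (\<Sum>n<q * K. g n) / real (q * K)) \<longlonglongrightarrow> 0"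
    using LIMSEQ_subseq_LIMSEQ[OF lim] by (simp only: o_def)
  moreover have "0 < a / real q" using a q by simp
  ultimately have "\<forall>\<^sub>F K in sequentially. (\<Sum>n<q * K. g n) / real (q * K) < a / real q"
    by (rule order_tendstoD)
  then obtain K0 where K0: "\<forall>K\<ge>K0. (\<Sum>n<q * K. g n) / real (q * K) < a / real q"
    unfolding eventually_sequentially ..
  define K where "K = Suc K0"
  have K: "K > 0" "(\<Sum>n<q * K. g n) / real (q * K) < a / real q"
    using K0[rule_format, of K] unfolding K_def by auto
  have "real K * a = (\<Sum>n\<in>(\<lambda>k. k * q) ` {..<K}. g n)"
    using q on_multiples by (subst sum.reindex) (auto simp: inj_on_def)
  also have "\<dots> \<le> (\<Sum>n<q * K. g n)"
    using q nonneg by (intro sum_mono2) (auto simp: mult.commute)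
  finally have "a / real q \<le> (\<Sum>n<q * K. g n) / real (q * K)"
    using q K(1) by (simp add: field_simps)
  with K(2) show False by simp
qed

locale invertible_mps =
  fixes M :: "'a measure" and T :: "'a \<Rightarrow> 'a"
  assumes inv_mps: "inv_mps M T"
begin

abbreviation "T' \<equiv> the_inv_into (space M) T"

lemma prob_space: "prob_space M"
  and T_measurable: "T \<in> M \<rightarrow>\<^sub>M M"
  and T_bij: "bij_betw T (space M) (space M)"
  and T'_measurable: "T' \<in> M \<rightarrow>\<^sub>M M"
  and measure_T_vimage: "A \<in> sets M \<Longrightarrow> measure M (T -` A \<inter> space M) = measure M A"
  using inv_mps unfolding inv_mps_def by auto

sublocale prob_space M
  by (rule prob_space)

lemma T'_T: "x \<in> space M \<Longrightarrow> T' (T x) = x"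
  using T_bij by (simp add: bij_betw_imp_inj_on the_inv_into_f_f)

lemma T_T': "x \<in> space M \<Longrightarrow> T (T' x) = x"
  using T_bij by (metis bij_betw_imp_surj_on f_the_inv_into_f bij_betw_imp_inj_on)

lemma measure_T'_vimage:
  assumes A: "A \<in> sets M"
  shows "measure M (T' -` A \<inter> space M) = measure M A"
proof -
  have B: "T' -` A \<inter> space M \<in> sets M"
    using T'_measurable A by (rule measurable_sets)
  have "T -` (T' -` A \<inter> space M) \<inter> space M = A"
    using T'_T measurable_space[OF T_measurable] sets.sets_into_space[OF A] by auto
  then show ?thesis using measure_T_vimage[OF B] by simp
qed

lemma Tpow_measurable: "Tpow M T k \<in> M \<rightarrow>\<^sub>M M"
  unfolding Tpow_def using funpow_measurable[OF T_measurable] funpow_measurable[OF T'_measurable]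
  by auto

lemma Tpow_space: "x \<in> space M \<Longrightarrow> Tpow M T k x \<in> space M"
  using Tpow_measurable by (rule measurable_space)

lemma measure_Tpow_vimage: "A \<in> sets M \<Longrightarrow> measure M (Tpow M T k -` A \<inter> space M) = measure M A"
  unfolding Tpow_def
  using measure_funpow_vimage[OF T_measurable measure_T_vimage]
    measure_funpow_vimage[OF T'_measurable measure_T'_vimage]
  by auto

lemma Tpow_plus_1:
  assumes x: "x \<in> space M"
  shows "Tpow M T (k + 1) x = T (Tpow M T k x)"
proof -
  consider "0 \<le> k" | "k = -1" | "k < -1" by linarith
  then show ?thesis
  proof cases
    case 1
    then have "nat (k + 1) = Suc (nat k)" by simp
    with 1 show ?thesis by (simp add: Tpow_def)
  next
    case 2
    then show ?thesis using x by (simp add: Tpow_def T_T')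
  next
    case 3
    then have "nat (- k) = Suc (nat (- (k + 1)))" by simp
    with 3 have "Tpow M T k x = T' (Tpow M T (k + 1) x)" by (simp add: Tpow_def)
    then show ?thesis using T_T'[OF Tpow_space[OF x]] by simp
  qed
qed

lemma Tpow_minus_1:
  assumes "x \<in> space M"
  shows "Tpow M T (k - 1) x = T' (Tpow M T k x)"
  using Tpow_plus_1[OF assms, of "k - 1"] T'_T[OF Tpow_space[OF assms]] by simp

lemma Tpow_add:
  assumes x: "x \<in> space M"
  shows "Tpow M T (a + b) x = Tpow M T a (Tpow M T b x)"
proof (induction a rule: int_induct[where k = 0])
  case base
  then show ?case by (simp add: Tpow_def)
next
  case (step1 i)
  have "Tpow M T (i + 1 + b) x = T (Tpow M T (i + b) x)"
    using Tpow_plus_1[OF x, of "i + b"] by (simp add: ac_simps)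
  then show ?case using step1 Tpow_plus_1[OF Tpow_space[OF x]] by simp
next
  case (step2 i)
  have "Tpow M T (i - 1 + b) x = T' (Tpow M T (i + b) x)"
    using Tpow_minus_1[OF x, of "i + b"] by (simp add: algebra_simps)
  then show ?case using step2 Tpow_minus_1[OF Tpow_space[OF x]] by simp
qed

lemma Tpow_uminus_Tpow: "x \<in> space M \<Longrightarrow> Tpow M T (- k) (Tpow M T k x) = x"
  using Tpow_add[of x "- k" k] by (simp add: Tpow_def)

lemma inj_on_Tpow: "inj_on (Tpow M T k) (space M)"
  by (metis Tpow_uminus_Tpow inj_onI)

lemma Tset_eq_vimage:
  assumes "D \<subseteq> space M"
  shows "Tset M T n D = Tpow M T (- n) -` D \<inter> space M"
  unfolding Tset_def using assms Tpow_uminus_Tpow[of _ n] Tpow_uminus_Tpow[of _ "- n"] Tpow_space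
  by (auto simp: image_iff) (metis minus_minus)

lemma funpow_vimage_eq_Tset: "A \<subseteq> space M \<Longrightarrow> (T ^^ n) -` A \<inter> space M = Tset M T (- int n) A"
  using Tset_eq_vimage[of A "- int n"] by (simp add: Tpow_def)

lemma sets_Tset: "D \<in> sets M \<Longrightarrow> Tset M T n D \<in> sets M"
  using Tset_eq_vimage[OF sets.sets_into_space] Tpow_measurable by (metis measurable_sets)

lemma measure_Tset: "D \<in> sets M \<Longrightarrow> measure M (Tset M T n D) = measure M D"
  using Tset_eq_vimage[OF sets.sets_into_space] measure_Tpow_vimage by metis

lemma Tset_subset_space: "D \<subseteq> space M \<Longrightarrow> Tset M T n D \<subseteq> space M"
  unfolding Tset_def using Tpow_space by auto

lemma Tset_space: "Tset M T n (space M) = space M"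
  using Tset_eq_vimage[of "space M" n] Tpow_space by auto

lemma Tset_0: "Tset M T 0 D = D"
  by (simp add: Tset_def Tpow_def)

lemma Tset_add: "D \<subseteq> space M \<Longrightarrow> Tset M T (a + b) D = Tset M T a (Tset M T b D)"
  unfolding Tset_def image_comp using Tpow_add by (auto intro!: image_cong)

lemma Tset_Diff:
  "A \<subseteq> space M \<Longrightarrow> B \<subseteq> space M \<Longrightarrow> Tset M T n (A - B) = Tset M T n A - Tset M T n B"
  unfolding Tset_def by (rule inj_on_image_set_diff[OF inj_on_Tpow]) auto

lemma Tset_Int:
  "A \<subseteq> space M \<Longrightarrow> B \<subseteq> space M \<Longrightarrow> Tset M T n (A \<inter> B) = Tset M T n A \<inter> Tset M T n B"
  unfolding Tset_def by (rule inj_on_image_Int[OF inj_on_Tpow]) auto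

lemma Tset_sym_diff:
  "A \<subseteq> space M \<Longrightarrow> B \<subseteq> space M \<Longrightarrow>
    Tset M T n (sym_diff A B) = sym_diff (Tset M T n A) (Tset M T n B)"
  using Tset_Diff by (simp add: Tset_def image_Un)

lemma measure_sym_diff_Tset_uminus:
  assumes A: "A \<in> sets M"
  shows "measure M (sym_diff A (Tset M T (- p) A)) = measure M (sym_diff A (Tset M T p A))"
proof -
  have sA: "A \<subseteq> space M" using A sets.sets_into_space by auto
  have "Tset M T (- p) (sym_diff A (Tset M T p A)) = sym_diff (Tset M T (- p) A) A"
    using Tset_sym_diff[OF sA Tset_subset_space[OF sA]] Tset_add[OF sA, of "- p" p]
    by (simp add: Tset_0)
  then show ?thesis
    using measure_Tset[of "sym_diff A (Tset M T p A)" "- p"] A sets_Tset[OF A]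
    by (simp add: Un_commute)
qed

lemma measure_sym_diff_Tset_multiple_eq_0:
  assumes A: "A \<in> sets M" and null: "measure M (sym_diff A (Tset M T p A)) = 0"
  shows "measure M (sym_diff A (Tset M T (int k * p) A)) = 0"
proof (induction k)
  case 0
  show ?case by (simp add: Tset_0)
next
  case (Suc k)
  have sA: "A \<subseteq> space M" using A sets.sets_into_space by auto
  define B where "B = Tset M T (int k * p) A"
  have B: "B \<in> sets M" unfolding B_def using A by (rule sets_Tset)
  have shift: "Tset M T (int (Suc k) * p) A = Tset M T p B"
    using Tset_add[OF sA, of p "int k * p"] by (simp add: B_def algebra_simps)
  have "sym_diff A (Tset M T p B) \<subseteq>
      sym_diff A (Tset M T p A) \<union> sym_diff (Tset M T p A) (Tset M T p B)"
    by (rule sym_diff_subset_Un)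
  then have "sym_diff A (Tset M T (int (Suc k) * p) A) \<subseteq>
      sym_diff A (Tset M T p A) \<union> Tset M T p (sym_diff A B)"
    unfolding shift Tset_sym_diff[OF sA sets.sets_into_space[OF B]] .
  moreover have "sym_diff A (Tset M T p A) \<in> sets M"
    using A by (intro sets.Un sets.Diff sets_Tset)
  moreover have "Tset M T p (sym_diff A B) \<in> sets M"
    using A B by (intro sets.Un sets.Diff sets_Tset)
  moreover note null
  moreover have "measure M (Tset M T p (sym_diff A B)) = 0"
    using measure_Tset[of "sym_diff A B" p] A B Suc.IH by (simp add: B_def)
  ultimately show ?case
    by (rule measure_zero_if_subset_Un_null)
qed

text \<open>Weak mixing is phrased with forward iterates \<open>T\<^sup>n\<close>, \<open>n \<ge> 0\<close>, whose preimages are the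
  images under \<open>T\<^sup>-\<^sup>n\<close>; this is why the period is replaced by \<open>- \<bar>p\<bar>\<close>.\<close>

lemma weak_mixing_null_sym_diff_Tset:
  assumes wm: "weak_mixing M T" and A: "A \<in> sets M" and p: "p \<noteq> 0"
    and null: "measure M (sym_diff A (Tset M T p A)) = 0"
  shows "measure M A = 0 \<or> measure M A = 1"
proof (rule ccontr)
  assume "\<not> ?thesis"
  then have "0 < measure M A" "measure M A < 1"
    using measure_nonneg[of M A] prob_le_1[of A] by (auto simp: less_le)
  then have a: "0 < measure M A - measure M A * measure M A"
    using mult_strict_left_mono[of "measure M A" 1 "measure M A"] by simp
  define q where "q = nat \<bar>p\<bar>"
  have q: "0 < q" using p q_def by simp
  have "- int q = p \<or> - int q = - p" using q_def by linarith
  then have null_q: "measure M (sym_diff A (Tset M T (- int q) A)) = 0"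
    using null measure_sym_diff_Tset_uminus[OF A, of p] by (elim disjE) simp_all
  define g where
    "g n = \<bar>measure M (A \<inter> ((T ^^ n) -` A \<inter> space M)) - measure M A * measure M A\<bar>" for n
  have nonneg: "0 \<le> g n" for n
    unfolding g_def by simp
  have on_multiples: "g (k * q) = measure M A - measure M A * measure M A" for k
  proof -
    have "(T ^^ (k * q)) -` A \<inter> space M = Tset M T (int k * - int q) A"
      using funpow_vimage_eq_Tset[OF sets.sets_into_space[OF A], of "k * q"] by simp
    moreover have "measure M (A \<inter> Tset M T (int k * - int q) A) = measure M A"
      by (rule measure_Int_eq_if_null_sym_diff[OF A sets_Tset[OF A]
            measure_sym_diff_Tset_multiple_eq_0[OF A null_q]])
    ultimately show ?thesis using a unfolding g_def by simp
  qed
  have "(\<lambda>N. (\<Sum>n<N. g n) / real N) \<longlonglongrightarrow> 0"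
    using wm A unfolding weak_mixing_def g_def by fast
  with Cesaro_mean_not_tendsto_0[where g = g, OF q a nonneg on_multiples] show False ..
qed

lemma measure_Int_Tset_compl_pos:
  assumes wm: "weak_mixing M T" and A: "A \<in> sets M"
    and a0: "0 < measure M A" and a1: "measure M A < 1" and m: "m \<noteq> 0"
  shows "0 < measure M (A \<inter> Tset M T m (space M - A))"
proof (rule ccontr)
  assume "\<not> 0 < measure M (A \<inter> Tset M T m (space M - A))"
  then have null: "measure M (A \<inter> Tset M T m (space M - A)) = 0"
    using measure_nonneg[of M "A \<inter> Tset M T m (space M - A)"] by linarith
  have "A - Tset M T m A = A \<inter> Tset M T m (space M - A)"
    using sets.sets_into_space[OF A] by (auto simp: Tset_Diff Tset_space)
  then have "measure M (sym_diff A (Tset M T m A)) = 0"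
    using null A sets_Tset[OF A] measure_Tset[OF A]
    by (intro measure_sym_diff_eq_0_if_measure_Diff_eq_0) auto
  with weak_mixing_null_sym_diff_Tset[OF wm A m] a0 a1 show False by simp
qed

lemma Int_Tset_compl_disjoint:
  fixes m :: int
  assumes sA: "A \<subseteq> space M"
  defines "D \<equiv> A \<inter> Tset M T m (space M - A)"
  shows "D \<inter> Tset M T m D = {}"
proof -
  have "Tset M T m D \<subseteq> Tset M T m A" unfolding Tset_def D_def by auto
  moreover have "Tset M T m A \<inter> Tset M T m (space M - A) = {}"
    using Tset_Int[OF sA, of "space M - A" m] by (simp add: Tset_def)
  ultimately show ?thesis unfolding D_def by auto
qed

lemma measure_Int_Tset_shift_le:
  assumes D: "D \<in> sets M" and disjoint: "D \<inter> Tset M T m D = {}"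
  shows "measure M (D \<inter> Tset M T (n + m) D) \<le> measure M (sym_diff D (Tset M T n D))"
proof -
  have sD: "D \<subseteq> space M" using D sets.sets_into_space by auto
  have TnD: "Tset M T n D \<in> sets M" using D by (rule sets_Tset)
  have "D \<inter> Tset M T (n + m) D \<subseteq> Tset M T m (Tset M T n D) - Tset M T m D"
    using disjoint Tset_add[OF sD, of m n] by (auto simp: add.commute)
  also have "\<dots> = Tset M T m (Tset M T n D - D)"
    using Tset_Diff[OF Tset_subset_space[OF sD] sD] by simp
  finally have "measure M (D \<inter> Tset M T (n + m) D) \<le> measure M (Tset M T m (Tset M T n D - D))"
    using D TnD by (intro finite_measure_mono sets_Tset) auto
  also have "\<dots> = measure M (Tset M T n D - D)"
    using D TnD by (intro measure_Tset) auto
  also have "\<dots> \<le> measure M (sym_diff D (Tset M T n D))"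
    using D TnD by (intro finite_measure_mono) auto
  finally show ?thesis .
qed

lemma not_strong_recurrence_shift_if_disjoint:
  assumes rigid: "set_of_rigidity M T S" and D: "D \<in> sets M" and pos: "0 < measure M D"
    and disjoint: "D \<inter> Tset M T m D = {}"
  shows "\<not> set_of_strong_recurrence M T ((\<lambda>n. n + m) ` S)"
proof
  assume "set_of_strong_recurrence M T ((\<lambda>n. n + m) ` S)"
  then obtain c where c: "c > 0"
    and infinite: "infinite {k \<in> (\<lambda>n. n + m) ` S. measure M (D \<inter> Tset M T k D) > c}"
    using D pos unfolding set_of_strong_recurrence_def by blast
  have "finite {n \<in> S. measure M (sym_diff D (Tset M T n D)) > c}"
    using rigid D c unfolding set_of_rigidity_def by blast
  moreover have "{k \<in> (\<lambda>n. n + m) ` S. measure M (D \<inter> Tset M T k D) > c}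
      \<subseteq> (\<lambda>n. n + m) ` {n \<in> S. measure M (sym_diff D (Tset M T n D)) > c}"
  proof
    fix k assume "k \<in> {k \<in> (\<lambda>n. n + m) ` S. measure M (D \<inter> Tset M T k D) > c}"
    then obtain n where "n \<in> S" "k = n + m" "c < measure M (D \<inter> Tset M T (n + m) D)"
      by auto
    with measure_Int_Tset_shift_le[OF D disjoint, of n]
    show "k \<in> (\<lambda>n. n + m) ` {n \<in> S. measure M (sym_diff D (Tset M T n D)) > c}"
      by force
  qed
  ultimately show False using infinite finite_subset by blast
qed

end

theorem lemma4p1:
  fixes M :: "'a measure" and T :: "'a \<Rightarrow> 'a" and S :: "int set" and m :: int
  assumes "inv_mps M T"
    and "nontrivial_sys M"
    and "weak_mixing M T"
    and "set_of_rigidity M T S"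
    and "m \<noteq> 0"
  shows "\<not> set_of_strong_recurrence M T ((\<lambda>n. n + m) ` S)"
proof -
  interpret invertible_mps M T by (rule invertible_mps.intro) (rule assms(1))
  obtain A where A: "A \<in> sets M" "0 < measure M A" "measure M A < 1"
    using assms(2) unfolding nontrivial_sys_def by auto
  define D where "D = A \<inter> Tset M T m (space M - A)"
  have D: "D \<in> sets M" unfolding D_def using A sets_Tset[of "space M - A"] by auto
  have "0 < measure M D" unfolding D_def using measure_Int_Tset_compl_pos assms(3,5) A by blast
  moreover have "D \<inter> Tset M T m D = {}"
    unfolding D_def using A(1) by (intro Int_Tset_compl_disjoint sets.sets_into_space)
  ultimately show ?thesis
    using not_strong_recurrence_shift_if_disjoint[OF assms(4) D] by blast
qed

end
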